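(* Let $\{R_i\}_{i\in I}$ be a family of commutative rings with identity and $R=\prod_{i\in I}R_i$. The following are equivalent: (1) $R$ is almost complemented and $\mathfrak{N}(R)=\prod_{i\in I}\mathfrak{N}(R_i)$; (2) $R$ is almost complemented and $\mathrm{areg}(R)=\prod_{i\in I}\mathrm{areg}(R_i)$.
   Context: For a ring $A$, $\mathfrak{N}(A)$ is the nilradical, $\mathrm{reg}(A)$ the set of regular elements, and $\mathrm{areg}(A)=\{x\in A: x+\mathfrak{N}(A)\in\mathrm{reg}(A/\mathfrak{N}(A))\}$. $A$ is complemented if for every $a$ there is $b$ with $ab=0$ and $a+b\in\mathrm{reg}(A)$; $A$ is almost complemented if $A/\mathfrak{N}(A)$ is complemented. *)

theory Defs
  imports "HOL-Algebra.QuotRing" "HOL-Library.FuncSet"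
begin

definition nilrad :: "('a, 'b) ring_scheme \<Rightarrow> 'a set" where
  "nilrad A = {x \<in> carrier A. \<exists>n::nat. x [^]\<^bsub>A\<^esub> n = \<zero>\<^bsub>A\<^esub>}"

definition reg :: "('a, 'b) ring_scheme \<Rightarrow> 'a set" where
  "reg A = {x \<in> carrier A. \<forall>y \<in> carrier A. x \<otimes>\<^bsub>A\<^esub> y = \<zero>\<^bsub>A\<^esub> \<longrightarrow> y = \<zero>\<^bsub>A\<^esub>}"

definition areg :: "('a, 'b) ring_scheme \<Rightarrow> 'a set" where
  "areg A = {x \<in> carrier A. (nilrad A +>\<^bsub>A\<^esub> x) \<in> reg (A Quot (nilrad A))}"

definition complemented :: "('a, 'b) ring_scheme \<Rightarrow> bool" where
  "complemented A \<longleftrightarrow> (\<forall>a \<in> carrier A. \<exists>b \<in> carrier A.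
      a \<otimes>\<^bsub>A\<^esub> b = \<zero>\<^bsub>A\<^esub> \<and> a \<oplus>\<^bsub>A\<^esub> b \<in> reg A)"

definition almost_complemented :: "('a, 'b) ring_scheme \<Rightarrow> bool" where
  "almost_complemented A \<longleftrightarrow> complemented (A Quot (nilrad A))"

definition prod_ring :: "'i set \<Rightarrow> ('i \<Rightarrow> ('a, 'b) ring_scheme) \<Rightarrow> ('i \<Rightarrow> 'a) ring" where
  "prod_ring I R = \<lparr>carrier = PiE I (\<lambda>i. carrier (R i)),
     mult = (\<lambda>x y. \<lambda>i\<in>I. x i \<otimes>\<^bsub>R i\<^esub> y i),
     one = (\<lambda>i\<in>I. \<one>\<^bsub>R i\<^esub>),
     zero = (\<lambda>i\<in>I. \<zero>\<^bsub>R i\<^esub>),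
     add = (\<lambda>x y. \<lambda>i\<in>I. x i \<oplus>\<^bsub>R i\<^esub> y i)\<rparr>"

end

theory Submission
  imports Defs
begin

(* Multiplication by an almost regular element reflects nilpotency, and a nilpotent element of
   the product is nilpotent in every coordinate. If conversely the componentwise nilpotent
   elements are nilpotent, almost regularity in the product is therefore decided coordinatewise,
   testing against elements supported in a single coordinate. For the other direction take x
   with nilpotent coordinates: almost complementedness gives b with x b nilpotent and x + b
   almost regular. Adding a nilpotent does not affect almost regularity, so every b_i, hence b,
   is almost regular, and then b x nilpotent forces x to be nilpotent. *)

lemma nilrad_subset: "nilrad A \<subseteq> carrier A"
  unfolding nilrad_def by blast

lemma nilradI: "x \<in> carrier A \<Longrightarrow> x [^]\<^bsub>A\<^esub> (n::nat) = \<zero>\<^bsub>A\<^esub> \<Longrightarrow> x \<in> nilrad A"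
  unfolding nilrad_def by blast

lemma nilradE:
  assumes "x \<in> nilrad A"
  obtains n :: nat where "x \<in> carrier A" "x [^]\<^bsub>A\<^esub> n = \<zero>\<^bsub>A\<^esub>"
  using assms unfolding nilrad_def by blast

context cring begin

lemma nat_pow_sum_split:
  fixes a b :: nat
  assumes x: "x \<in> carrier R" and y: "y \<in> carrier R"
  shows "\<exists>A\<in>carrier R. \<exists>B\<in>carrier R. (x \<oplus> y) [^] (a + b) = x [^] a \<otimes> A \<oplus> y [^] b \<otimes> B"
proof (induction a arbitrary: b)
  case 0
  show ?case
    using x y by (intro bexI[of _ "(x \<oplus> y) [^] b"] bexI[of _ "\<zero>"]) auto
next
  case (Suc a)
  note IH_a = Suc.IH
  show ?case
  proof (induction b)
    case 0
    show ?case
      using x y by (intro bexI[of _ "\<zero>"] bexI[of _ "(x \<oplus> y) [^] Suc a"]) auto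
  next
    case (Suc b)
    obtain A1 B1 where AB1: "A1 \<in> carrier R" "B1 \<in> carrier R"
      and e1: "(x \<oplus> y) [^] (a + Suc b) = x [^] a \<otimes> A1 \<oplus> y [^] Suc b \<otimes> B1"
      using IH_a by blast
    obtain A2 B2 where AB2: "A2 \<in> carrier R" "B2 \<in> carrier R"
      and e2: "(x \<oplus> y) [^] (Suc a + b) = x [^] Suc a \<otimes> A2 \<oplus> y [^] b \<otimes> B2"
      using Suc.IH by blast
    have "(x \<oplus> y) [^] (Suc a + Suc b)
        = (x \<oplus> y) [^] (a + Suc b) \<otimes> x \<oplus> (x \<oplus> y) [^] (Suc a + b) \<otimes> y"
      using x y by (simp add: r_distr)
    also have "\<dots> = x [^] Suc a \<otimes> (A1 \<oplus> A2 \<otimes> y) \<oplus> y [^] Suc b \<otimes> (B1 \<otimes> x \<oplus> B2)"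
    proof -
      have "(p \<otimes> A1 \<oplus> q \<otimes> y \<otimes> B1) \<otimes> x \<oplus> (p \<otimes> x \<otimes> A2 \<oplus> q \<otimes> B2) \<otimes> y
          = p \<otimes> x \<otimes> (A1 \<oplus> A2 \<otimes> y) \<oplus> q \<otimes> y \<otimes> (B1 \<otimes> x \<oplus> B2)"
        if "p \<in> carrier R" "q \<in> carrier R" for p q
        using that x y AB1 AB2 by algebra
      from this[OF nat_pow_closed[OF x] nat_pow_closed[OF y]] show ?thesis
        unfolding e1 e2 nat_pow_Suc .
    qed
    finally show ?case
      using x y AB1 AB2 by blast
  qed
qed

lemma nilrad_add:
  assumes "x \<in> nilrad R" "y \<in> nilrad R" shows "x \<oplus> y \<in> nilrad R"
proof -
  obtain n :: nat where x: "x \<in> carrier R" "x [^] n = \<zero>"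
    using assms(1) by (rule nilradE)
  obtain m :: nat where y: "y \<in> carrier R" "y [^] m = \<zero>"
    using assms(2) by (rule nilradE)
  obtain A B where "A \<in> carrier R" "B \<in> carrier R"
    and split: "(x \<oplus> y) [^] (n + m) = x [^] n \<otimes> A \<oplus> y [^] m \<otimes> B"
    using nat_pow_sum_split[OF x(1) y(1)] by blast
  then have "(x \<oplus> y) [^] (n + m) = \<zero>"
    unfolding split x(2) y(2) by simp
  with x y show ?thesis
    by (intro nilradI) simp_all
qed

lemma nilrad_mult:
  assumes "a \<in> nilrad R" "x \<in> carrier R" shows "x \<otimes> a \<in> nilrad R"
proof -
  obtain n :: nat where "a \<in> carrier R" "a [^] n = \<zero>"
    using assms(1) by (rule nilradE)
  with assms(2) show ?thesis
    by (intro nilradI[of _ _ n]) (simp_all add: nat_pow_distrib)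
qed

lemma zero_in_nilrad: "\<zero> \<in> nilrad R"
  by (rule nilradI[of _ _ 1]) simp_all

lemma nilrad_ideal: "ideal (nilrad R) R"
proof (rule idealI)
  show "subgroup (nilrad R) (add_monoid R)"
  proof (rule add.subgroupI)
    show "nilrad R \<subseteq> carrier R"
      by (rule nilrad_subset)
    show "nilrad R \<noteq> {}"
      using zero_in_nilrad by blast
  next
    fix a assume a: "a \<in> nilrad R"
    then have "\<ominus> \<one> \<otimes> a \<in> nilrad R"
      by (simp add: nilrad_mult)
    moreover have "a \<in> carrier R"
      using a nilrad_subset[of R] by blast
    ultimately show "\<ominus> a \<in> nilrad R"
      by (simp add: l_minus)
  qed (rule nilrad_add)
next
  fix a x assume a: "a \<in> nilrad R" and x: "x \<in> carrier R"
  show "x \<otimes> a \<in> nilrad R"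
    using a x by (rule nilrad_mult)
  moreover have "a \<otimes> x = x \<otimes> a"
    using a x nilrad_subset[of R] by (blast intro: m_comm)
  ultimately show "a \<otimes> x \<in> nilrad R"
    by simp
qed (rule ring_axioms)

end

lemma areg_subset: "areg A \<subseteq> carrier A"
  unfolding areg_def by blast

lemma (in ideal) FactRing_carrier_eq: "carrier (R Quot I) = (+>) I ` carrier R"
  unfolding FactRing_def A_RCOSETS_def' by auto

lemma (in ideal) rcos_eq_FactRing_zero_iff:
  assumes "x \<in> carrier R"
  shows "I +> x = \<zero>\<^bsub>R Quot I\<^esub> \<longleftrightarrow> x \<in> I"
  using assms rcos_const_imp_mem a_rcos_zero[OF ideal_axioms] by (auto simp: FactRing_def)

lemma (in ideal) rcos_FactRing_mult:
  "x \<in> carrier R \<Longrightarrow> y \<in> carrier R \<Longrightarrow> (I +> x) \<otimes>\<^bsub>R Quot I\<^esub> (I +> y) = I +> (x \<otimes> y)"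
  by (simp add: FactRing_def rcoset_mult_add)

lemma (in ideal) rcos_FactRing_add:
  "x \<in> carrier R \<Longrightarrow> y \<in> carrier R \<Longrightarrow> (I +> x) \<oplus>\<^bsub>R Quot I\<^esub> (I +> y) = I +> (x \<oplus> y)"
  by (simp add: FactRing_def a_rcos_sum)

lemma (in ideal) rcos_mem_reg_FactRing_iff:
  assumes "x \<in> carrier R"
  shows "I +> x \<in> reg (R Quot I) \<longleftrightarrow> (\<forall>y\<in>carrier R. x \<otimes> y \<in> I \<longrightarrow> y \<in> I)"
  using assms unfolding reg_def FactRing_carrier_eq
  by (auto simp: rcos_FactRing_mult rcos_eq_FactRing_zero_iff)

lemma (in ideal) complemented_FactRing_iff:
  "complemented (R Quot I) \<longleftrightarrow>
     (\<forall>a\<in>carrier R. \<exists>b\<in>carrier R. a \<otimes> b \<in> I \<and> I +> (a \<oplus> b) \<in> reg (R Quot I))"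
  unfolding complemented_def FactRing_carrier_eq
  by (auto simp: rcos_FactRing_mult rcos_FactRing_add rcos_eq_FactRing_zero_iff)

context cring begin

lemma areg_iff:
  "x \<in> areg R \<longleftrightarrow> x \<in> carrier R \<and> (\<forall>y\<in>carrier R. x \<otimes> y \<in> nilrad R \<longrightarrow> y \<in> nilrad R)"
  unfolding areg_def using ideal.rcos_mem_reg_FactRing_iff[OF nilrad_ideal] by blast

lemma almost_complemented_iff:
  "almost_complemented R \<longleftrightarrow>
     (\<forall>a\<in>carrier R. \<exists>b\<in>carrier R. a \<otimes> b \<in> nilrad R \<and> a \<oplus> b \<in> areg R)"
  unfolding almost_complemented_def ideal.complemented_FactRing_iff[OF nilrad_ideal] areg_def
  by blast

lemma areg_of_nilrad_add:
  assumes n: "n \<in> nilrad R" and a: "a \<in> carrier R" and na: "n \<oplus> a \<in> areg R"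
  shows "a \<in> areg R"
  unfolding areg_iff
proof (intro conjI ballI impI a)
  fix y assume y: "y \<in> carrier R" and ay: "a \<otimes> y \<in> nilrad R"
  have n_carrier: "n \<in> carrier R"
    using n nilrad_subset[of R] by blast
  have "n \<otimes> y \<in> nilrad R"
    using nilrad_mult[OF n y] m_comm[OF n_carrier y] by simp
  then have "n \<otimes> y \<oplus> a \<otimes> y \<in> nilrad R"
    using ay by (rule nilrad_add)
  then have "(n \<oplus> a) \<otimes> y \<in> nilrad R"
    using n_carrier a y by (simp add: l_distr)
  then show "y \<in> nilrad R"
    using na y unfolding areg_iff by blast
qed

end

lemma prod_ring_simps:
  "carrier (prod_ring I R) = (\<Pi>\<^sub>E i\<in>I. carrier (R i))"
  "x \<otimes>\<^bsub>prod_ring I R\<^esub> y = (\<lambda>i\<in>I. x i \<otimes>\<^bsub>R i\<^esub> y i)"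
  "x \<oplus>\<^bsub>prod_ring I R\<^esub> y = (\<lambda>i\<in>I. x i \<oplus>\<^bsub>R i\<^esub> y i)"
  "\<one>\<^bsub>prod_ring I R\<^esub> = (\<lambda>i\<in>I. \<one>\<^bsub>R i\<^esub>)"
  "\<zero>\<^bsub>prod_ring I R\<^esub> = (\<lambda>i\<in>I. \<zero>\<^bsub>R i\<^esub>)"
  by (simp_all add: prod_ring_def)

lemma cring_prod_ring:
  assumes "\<And>i. i \<in> I \<Longrightarrow> cring (R i)"
  shows "cring (prod_ring I R)"
proof (intro cringI abelian_groupI comm_monoidI)
  show "\<exists>y\<in>carrier (prod_ring I R). y \<oplus>\<^bsub>prod_ring I R\<^esub> x = \<zero>\<^bsub>prod_ring I R\<^esub>"
    if "x \<in> carrier (prod_ring I R)" for x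
    using that by (intro bexI[of _ "\<lambda>i\<in>I. \<ominus>\<^bsub>R i\<^esub> x i"])
      (auto simp: prod_ring_simps PiE_iff fun_eq_iff assms cring.cring_simprules)
qed (auto simp: prod_ring_simps PiE_iff assms cring.cring_simprules
    monoid.r_one ring.is_monoid cring.axioms(1) intro!: extensionalityI[where A = I])

lemma nat_pow_prod_ring:
  "x [^]\<^bsub>prod_ring I R\<^esub> (n::nat) = (\<lambda>i\<in>I. x i [^]\<^bsub>R i\<^esub> n)"
  by (induction n) (auto simp: prod_ring_simps intro!: restrict_ext)

lemma nilrad_prod_ring_subset: "nilrad (prod_ring I R) \<subseteq> (\<Pi>\<^sub>E i\<in>I. nilrad (R i))"
proof
  fix x assume "x \<in> nilrad (prod_ring I R)"
  then obtain n :: nat where x: "x \<in> carrier (prod_ring I R)"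
    and "x [^]\<^bsub>prod_ring I R\<^esub> n = \<zero>\<^bsub>prod_ring I R\<^esub>"
    by (rule nilradE)
  then have "x i [^]\<^bsub>R i\<^esub> n = \<zero>\<^bsub>R i\<^esub>" if "i \<in> I" for i
    using that by (auto simp: nat_pow_prod_ring prod_ring_simps dest: fun_cong[of _ _ i])
  with x show "x \<in> (\<Pi>\<^sub>E i\<in>I. nilrad (R i))"
    by (auto simp: prod_ring_simps intro: nilradI)
qed

lemma PiE_subset_carrier_prod_ring:
  "(\<And>i. i \<in> I \<Longrightarrow> S i \<subseteq> carrier (R i)) \<Longrightarrow> (\<Pi>\<^sub>E i\<in>I. S i) \<subseteq> carrier (prod_ring I R)"
  unfolding prod_ring_simps by (rule PiE_mono)

lemma areg_prod_ring_iff_if_nilrad_eq: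
  assumes crings: "\<And>i. i \<in> I \<Longrightarrow> cring (R i)"
    and nilrad_eq: "nilrad (prod_ring I R) = (\<Pi>\<^sub>E i\<in>I. nilrad (R i))"
  shows "x \<in> areg (prod_ring I R) \<longleftrightarrow> x \<in> carrier (prod_ring I R) \<and>
      (\<forall>y\<in>carrier (prod_ring I R).
         (\<forall>i\<in>I. x i \<otimes>\<^bsub>R i\<^esub> y i \<in> nilrad (R i)) \<longrightarrow> (\<forall>i\<in>I. y i \<in> nilrad (R i)))"
proof -
  interpret P: cring "prod_ring I R"
    using crings by (rule cring_prod_ring)
  show ?thesis
    unfolding P.areg_iff nilrad_eq by (auto simp: prod_ring_simps PiE_iff)
qed

lemma areg_prod_ring_subset_if_nilrad_eq:
  assumes crings: "\<And>i. i \<in> I \<Longrightarrow> cring (R i)"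
    and nilrad_eq: "nilrad (prod_ring I R) = (\<Pi>\<^sub>E i\<in>I. nilrad (R i))"
  shows "areg (prod_ring I R) \<subseteq> (\<Pi>\<^sub>E i\<in>I. areg (R i))"
proof
  fix x assume x: "x \<in> areg (prod_ring I R)"
  then have x_carrier: "x \<in> (\<Pi>\<^sub>E i\<in>I. carrier (R i))"
    using areg_subset[of "prod_ring I R"] unfolding prod_ring_simps by blast
  have "x i \<in> areg (R i)" if i: "i \<in> I" for i
    unfolding cring.areg_iff[OF crings[OF i]]
  proof (intro conjI ballI impI)
    show "x i \<in> carrier (R i)"
      using x_carrier i by (rule PiE_mem)
    fix y assume y: "y \<in> carrier (R i)" and xy: "x i \<otimes>\<^bsub>R i\<^esub> y \<in> nilrad (R i)"
    define Y where "Y = (\<lambda>j\<in>I. if j = i then y else \<zero>\<^bsub>R j\<^esub>)"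
    have "Y \<in> carrier (prod_ring I R)"
      using y by (auto simp: Y_def prod_ring_simps cring.cring_simprules(2)[OF crings])
    moreover have "x j \<otimes>\<^bsub>R j\<^esub> Y j \<in> nilrad (R j)" if j: "j \<in> I" for j
    proof (cases "j = i")
      case True
      with xy j show ?thesis
        by (simp add: Y_def)
    next
      case False
      interpret Rj: cring "R j"
        using crings j .
      have "x j \<in> carrier (R j)"
        using x_carrier j by (rule PiE_mem)
      with False j show ?thesis
        by (simp add: Y_def Rj.zero_in_nilrad)
    qed
    ultimately have "Y i \<in> nilrad (R i)"
      using x i areg_prod_ring_iff_if_nilrad_eq[of I R, OF crings nilrad_eq] by blast
    then show "y \<in> nilrad (R i)"
      using i by (simp add: Y_def)
  qed
  with x_carrier show "x \<in> (\<Pi>\<^sub>E i\<in>I. areg (R i))"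
    by (simp add: PiE_iff)
qed

lemma PiE_areg_subset_if_nilrad_eq:
  assumes crings: "\<And>i. i \<in> I \<Longrightarrow> cring (R i)"
    and nilrad_eq: "nilrad (prod_ring I R) = (\<Pi>\<^sub>E i\<in>I. nilrad (R i))"
  shows "(\<Pi>\<^sub>E i\<in>I. areg (R i)) \<subseteq> areg (prod_ring I R)"
proof
  fix x assume x: "x \<in> (\<Pi>\<^sub>E i\<in>I. areg (R i))"
  have "x \<in> carrier (prod_ring I R)"
    using x PiE_subset_carrier_prod_ring[OF areg_subset] by blast
  moreover have "y i \<in> nilrad (R i)"
    if y: "y \<in> carrier (prod_ring I R)" and xy: "\<forall>i\<in>I. x i \<otimes>\<^bsub>R i\<^esub> y i \<in> nilrad (R i)"
      and i: "i \<in> I" for y i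
  proof -
    have "x i \<in> areg (R i)" "y i \<in> carrier (R i)"
      using PiE_mem[OF x i] PiE_mem[OF y[unfolded prod_ring_simps] i] .
    with xy i show ?thesis
      unfolding cring.areg_iff[OF crings[OF i]] by blast
  qed
  ultimately show "x \<in> areg (prod_ring I R)"
    using areg_prod_ring_iff_if_nilrad_eq[of I R, OF crings nilrad_eq] by blast
qed

lemma areg_prod_ring_eq_if_nilrad_eq:
  assumes "\<And>i. i \<in> I \<Longrightarrow> cring (R i)"
    and "nilrad (prod_ring I R) = (\<Pi>\<^sub>E i\<in>I. nilrad (R i))"
  shows "areg (prod_ring I R) = (\<Pi>\<^sub>E i\<in>I. areg (R i))"
  using areg_prod_ring_subset_if_nilrad_eq[of I R, OF assms]
    PiE_areg_subset_if_nilrad_eq[of I R, OF assms] by (rule equalityI)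

lemma nilrad_prod_ring_eq_if_areg_eq:
  assumes crings: "\<And>i. i \<in> I \<Longrightarrow> cring (R i)"
    and ac: "almost_complemented (prod_ring I R)"
    and areg_eq: "areg (prod_ring I R) = (\<Pi>\<^sub>E i\<in>I. areg (R i))"
  shows "nilrad (prod_ring I R) = (\<Pi>\<^sub>E i\<in>I. nilrad (R i))"
proof
  interpret P: cring "prod_ring I R"
    using crings by (rule cring_prod_ring)
  show "(\<Pi>\<^sub>E i\<in>I. nilrad (R i)) \<subseteq> nilrad (prod_ring I R)"
  proof
    fix x assume x: "x \<in> (\<Pi>\<^sub>E i\<in>I. nilrad (R i))"
    then have x_carrier: "x \<in> carrier (prod_ring I R)"
      using PiE_subset_carrier_prod_ring[OF nilrad_subset] by blast
    then obtain b where b: "b \<in> carrier (prod_ring I R)"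
      and xb: "x \<otimes>\<^bsub>prod_ring I R\<^esub> b \<in> nilrad (prod_ring I R)"
      and x_add_b: "x \<oplus>\<^bsub>prod_ring I R\<^esub> b \<in> areg (prod_ring I R)"
      using ac P.almost_complemented_iff by blast
    have "b i \<in> areg (R i)" if i: "i \<in> I" for i
    proof (rule cring.areg_of_nilrad_add[OF crings[OF i]])
      show "x i \<in> nilrad (R i)" "b i \<in> carrier (R i)"
        using x b i by (auto simp: prod_ring_simps)
      show "x i \<oplus>\<^bsub>R i\<^esub> b i \<in> areg (R i)"
        using x_add_b i by (auto simp: areg_eq prod_ring_simps)
    qed
    then have "b \<in> areg (prod_ring I R)"
      using b by (auto simp: areg_eq prod_ring_simps)
    moreover have "b \<otimes>\<^bsub>prod_ring I R\<^esub> x \<in> nilrad (prod_ring I R)"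
      using xb P.m_comm[OF b x_carrier] by simp
    ultimately show "x \<in> nilrad (prod_ring I R)"
      using x_carrier P.areg_iff by blast
  qed
qed (rule nilrad_prod_ring_subset)

theorem mainTheorem10:
  fixes I :: "'i set" and R :: "'i \<Rightarrow> ('a, 'b) ring_scheme"
  assumes "\<And>i. i \<in> I \<Longrightarrow> cring (R i)"
  shows "(almost_complemented (prod_ring I R) \<and>
            nilrad (prod_ring I R) = (\<Pi>\<^sub>E i\<in>I. nilrad (R i)))
     \<longleftrightarrow> (almost_complemented (prod_ring I R) \<and>
            areg (prod_ring I R) = (\<Pi>\<^sub>E i\<in>I. areg (R i)))"
  using areg_prod_ring_eq_if_nilrad_eq[of I R, OF assms]
    nilrad_prod_ring_eq_if_areg_eq[of I R, OF assms]
  by blast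

end
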